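(* For each $n\geq 1$, in $\mathbb{Z}[x_1,\dots,x_n]$ there is an equality of ideals \[ \langle h_1^n,h_2^n,\dots,h_n^n\rangle=\langle h_1^n,h_2^{n-1},h_3^{n-1},\dots,h_n^{n-1}\rangle . \]
   Context: For integers $0\leq a$ and $b\geq 1$, $h_a^b$ denotes the complete homogeneous symmetric polynomial of degree $a$ in the variables $x_1,\dots,x_b$, i.e. the sum of all monomials of degree $a$ in $x_1,\dots,x_b$. *)

theory Defs
  imports Main "HOL-Library.Poly_Mapping"
begin

text \<open>Polynomials with integer coefficients in variables indexed by nat:
  a monomial is a finitely supported exponent vector (nat =>0 nat),
  a polynomial is a finitely supported coefficient map on monomials.
  Multiplication is the convolution product from Poly_Mapping.\<close>
type_synonym ipoly = "(nat \<Rightarrow>\<^sub>0 nat) \<Rightarrow>\<^sub>0 int"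

definition mon_deg :: "(nat \<Rightarrow>\<^sub>0 nat) \<Rightarrow> nat" where
  "mon_deg m = (\<Sum>i\<in>Poly_Mapping.keys m. Poly_Mapping.lookup m i)"

definition in_vars :: "nat \<Rightarrow> ipoly \<Rightarrow> bool" where
  "in_vars n p = (\<forall>m\<in>Poly_Mapping.keys p. Poly_Mapping.keys m \<subseteq> {1..n})"

text \<open>complete homogeneous symmetric polynomial h_a^b in x_1..x_b\<close>
definition hcomplete :: "nat \<Rightarrow> nat \<Rightarrow> ipoly" where
  "hcomplete a b = (\<Sum>m\<in>{m. Poly_Mapping.keys m \<subseteq> {1..b} \<and> mon_deg m = a}. Poly_Mapping.single m 1)"

definition ideal_gen :: "nat \<Rightarrow> ipoly list \<Rightarrow> ipoly set" where
  "ideal_gen n gs = {(\<Sum>i<length gs. c i * gs ! i) | c. \<forall>i<length gs. in_vars n (c i)}"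

end

theory Submission
  imports Defs
begin

text \<open>Sorting the monomials of degree a + 1 in x_1, ..., x_(n+1) by whether x_(n+1) occurs
  gives the recurrence h_(a+1)^(n+1) = h_(a+1)^n + x_(n+1) h_a^(n+1). With n replaced by n - 1 it
  says that the generators g_a = h_a^n of the left ideal and k_a = h_a^(n-1) (for a >= 2;
  k_1 = g_1) of the right ideal satisfy the unitriangular relation g_a = k_a + x_n g_(a-1), so
  each generator of either list lies in the ideal generated by the other.\<close>

definition monomials_of_degree :: "nat \<Rightarrow> nat \<Rightarrow> (nat \<Rightarrow>\<^sub>0 nat) set" where
  "monomials_of_degree a b = {m. Poly_Mapping.keys m \<subseteq> {1..b} \<and> mon_deg m = a}"

definition var :: "nat \<Rightarrow> ipoly" where
  "var i = Poly_Mapping.single (Poly_Mapping.single i 1) 1"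

lemma mon_deg_eq_sum:
  assumes "finite A" "Poly_Mapping.keys m \<subseteq> A"
  shows "mon_deg m = sum (Poly_Mapping.lookup m) A"
  unfolding mon_deg_def
  using assms by (intro sum.mono_neutral_left) (auto simp: in_keys_iff)

lemma mon_deg_add: "mon_deg (m + m') = mon_deg m + mon_deg m'"
  unfolding mon_deg_def by (rule setsum_keys_plus_distrib) (simp_all add: lookup_add)

lemma mon_deg_single: "mon_deg (Poly_Mapping.single i k) = k"
  by (simp add: mon_deg_def)

lemma finite_monomials_of_degree: "finite (monomials_of_degree a b)"
proof -
  have "Poly_Mapping.lookup ` monomials_of_degree a b
          \<subseteq> {f. \<forall>x. (x \<in> {1..b} \<longrightarrow> f x \<in> {0..a}) \<and> (x \<notin> {1..b} \<longrightarrow> f x = 0)}"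
  proof clarify
    fix m x assume "m \<in> monomials_of_degree a b"
    then have keys: "Poly_Mapping.keys m \<subseteq> {1..b}" and deg: "mon_deg m = a"
      by (auto simp: monomials_of_degree_def)
    have "Poly_Mapping.lookup m x \<le> sum (Poly_Mapping.lookup m) {1..b}" if "x \<in> {1..b}"
      using that by (intro member_le_sum) auto
    then show "(x \<in> {1..b} \<longrightarrow> Poly_Mapping.lookup m x \<in> {0..a})
        \<and> (x \<notin> {1..b} \<longrightarrow> Poly_Mapping.lookup m x = 0)"
      using mon_deg_eq_sum[OF _ keys] deg keys by (auto simp: in_keys_iff)
  qed
  then have "finite (Poly_Mapping.lookup ` monomials_of_degree a b)"
    by (rule finite_subset) (intro finite_set_of_finite_funs; simp)
  moreover have "inj_on Poly_Mapping.lookup (monomials_of_degree a b)"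
    by (auto simp: inj_on_def poly_mapping_eqI)
  ultimately show ?thesis by (rule finite_imageD)
qed

lemma hcomplete_eq_sum_monomials:
  "hcomplete a b = (\<Sum>m\<in>monomials_of_degree a b. Poly_Mapping.single m 1)"
  by (simp add: hcomplete_def monomials_of_degree_def)

lemma monomials_of_degree_Suc_split:
  "monomials_of_degree (Suc a) (Suc n) =
     monomials_of_degree (Suc a) n \<union> (+) (Poly_Mapping.single (Suc n) 1) ` monomials_of_degree a (Suc n)"
  (is "?M = ?without \<union> ?with")
proof (intro equalityI subsetI)
  fix m assume m: "m \<in> ?M"
  show "m \<in> ?without \<union> ?with"
  proof (cases "Poly_Mapping.lookup m (Suc n) = 0")
    case True
    then have "Poly_Mapping.keys m \<subseteq> {1..Suc n} - {Suc n}"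
      using m by (auto simp: monomials_of_degree_def in_keys_iff)
    also have "\<dots> = {1..n}" by auto
    finally have "Poly_Mapping.keys m \<subseteq> {1..n}" .
    then show ?thesis using m by (simp add: monomials_of_degree_def)
  next
    case False
    define m' where "m' = m - Poly_Mapping.single (Suc n) 1"
    have m_eq: "m = Poly_Mapping.single (Suc n) 1 + m'"
      using False
      by (intro poly_mapping_eqI) (auto simp: m'_def lookup_add lookup_minus lookup_single when_def)
    have "Poly_Mapping.keys m' \<subseteq> {1..Suc n}"
      using m by (auto simp: monomials_of_degree_def m'_def in_keys_iff lookup_minus)
    moreover have "mon_deg m' = a"
      using m m_eq by (simp add: monomials_of_degree_def mon_deg_add mon_deg_single)
    ultimately show ?thesis using m_eq by (auto simp: monomials_of_degree_def)
  qed
next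
  fix m assume "m \<in> ?without \<union> ?with"
  then show "m \<in> ?M"
  proof
    assume "m \<in> ?without"
    then show ?thesis by (auto simp: monomials_of_degree_def)
  next
    assume "m \<in> ?with"
    then obtain m' where m': "m' \<in> monomials_of_degree a (Suc n)" "m = Poly_Mapping.single (Suc n) 1 + m'"
      by blast
    then have "Poly_Mapping.keys m \<subseteq> {1..Suc n}"
      using keys_add[of "Poly_Mapping.single (Suc n) 1" m'] by (auto simp: monomials_of_degree_def)
    with m' show ?thesis by (simp add: monomials_of_degree_def mon_deg_add mon_deg_single)
  qed
qed

lemma monomials_of_degree_Suc_split_disjoint:
  "monomials_of_degree (Suc a) n \<inter> (+) (Poly_Mapping.single (Suc n) 1) ` monomials_of_degree a (Suc n) = {}"
proof -
  have "Suc n \<in> Poly_Mapping.keys (Poly_Mapping.single (Suc n) 1 + m)" for m :: "nat \<Rightarrow>\<^sub>0 nat"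
    by (simp add: in_keys_iff lookup_add)
  then show ?thesis by (fastforce simp: monomials_of_degree_def)
qed

lemma hcomplete_Suc_recurrence:
  "hcomplete (Suc a) (Suc n) = hcomplete (Suc a) n + var (Suc n) * hcomplete a (Suc n)"
proof -
  let ?e = "Poly_Mapping.single (Suc n) (1::nat)"
  have "var (Suc n) * hcomplete a (Suc n)
      = (\<Sum>m\<in>monomials_of_degree a (Suc n). Poly_Mapping.single (?e + m) (1::int))"
    by (simp add: var_def hcomplete_eq_sum_monomials sum_distrib_left mult_single)
  also have "\<dots> = (\<Sum>m\<in>(+) ?e ` monomials_of_degree a (Suc n). Poly_Mapping.single m 1)"
    by (simp add: sum.reindex inj_on_def)
  finally have shifted: "var (Suc n) * hcomplete a (Suc n)
      = (\<Sum>m\<in>(+) ?e ` monomials_of_degree a (Suc n). Poly_Mapping.single m 1)" .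
  show ?thesis
    unfolding shifted hcomplete_eq_sum_monomials[of "Suc a"] monomials_of_degree_Suc_split
    by (rule sum.union_disjoint[OF finite_monomials_of_degree finite_imageI[OF finite_monomials_of_degree]
          monomials_of_degree_Suc_split_disjoint])
qed

lemma in_vars_zero: "in_vars n 0"
  by (simp add: in_vars_def)

lemma in_vars_one: "in_vars n 1"
  by (simp add: in_vars_def)

lemma in_vars_add: "in_vars n p \<Longrightarrow> in_vars n q \<Longrightarrow> in_vars n (p + q)"
  using keys_add[of p q] by (auto simp: in_vars_def)

lemma in_vars_mult:
  assumes "in_vars n p" "in_vars n q"
  shows "in_vars n (p * q)"
  unfolding in_vars_def
proof
  fix m assume "m \<in> Poly_Mapping.keys (p * q)"
  then obtain u v where "m = u + v" "u \<in> Poly_Mapping.keys p" "v \<in> Poly_Mapping.keys q"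
    using keys_mult[of p q] by blast
  moreover have "Poly_Mapping.keys u \<subseteq> {1..n}" "Poly_Mapping.keys v \<subseteq> {1..n}"
    using assms calculation by (auto simp: in_vars_def)
  ultimately show "Poly_Mapping.keys m \<subseteq> {1..n}"
    using keys_add[of u v] by blast
qed

lemma in_vars_uminus: "in_vars n p \<Longrightarrow> in_vars n (- p)"
  by (simp add: in_vars_def)

lemma in_vars_var: "i \<in> {1..n} \<Longrightarrow> in_vars n (var i)"
  by (simp add: in_vars_def var_def)

lemma ideal_gen_memI:
  "(\<And>i. i < length gs \<Longrightarrow> in_vars n (c i)) \<Longrightarrow> (\<Sum>i<length gs. c i * gs ! i) \<in> ideal_gen n gs"
  by (auto simp: ideal_gen_def)

lemma ideal_gen_memE:
  assumes "p \<in> ideal_gen n gs"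
  obtains c where "p = (\<Sum>i<length gs. c i * gs ! i)" "\<And>i. i < length gs \<Longrightarrow> in_vars n (c i)"
  using assms by (auto simp: ideal_gen_def)

lemma ideal_gen_nth_mem:
  assumes "i < length gs"
  shows "gs ! i \<in> ideal_gen n gs"
proof -
  have "(\<Sum>j<length gs. (if j = i then 1 else 0) * gs ! j) = (\<Sum>j<length gs. if j = i then gs ! i else 0)"
    by (intro sum.cong) auto
  also have "\<dots> = gs ! i"
    using assms by (simp add: sum.delta)
  finally show ?thesis
    using ideal_gen_memI[of gs n "\<lambda>j. if j = i then 1 else 0"] by (simp add: in_vars_one in_vars_zero)
qed

lemma ideal_gen_add:
  assumes "p \<in> ideal_gen n gs" "q \<in> ideal_gen n gs"
  shows "p + q \<in> ideal_gen n gs"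
proof -
  obtain c where "p = (\<Sum>i<length gs. c i * gs ! i)" "\<And>i. i < length gs \<Longrightarrow> in_vars n (c i)"
    using ideal_gen_memE[OF assms(1)] by blast
  moreover obtain d where "q = (\<Sum>i<length gs. d i * gs ! i)" "\<And>i. i < length gs \<Longrightarrow> in_vars n (d i)"
    using ideal_gen_memE[OF assms(2)] by blast
  ultimately show ?thesis
    using ideal_gen_memI[of gs n "\<lambda>i. c i + d i"] by (simp add: in_vars_add distrib_right sum.distrib)
qed

lemma ideal_gen_mult:
  assumes "in_vars n r" "p \<in> ideal_gen n gs"
  shows "r * p \<in> ideal_gen n gs"
proof -
  obtain c where "p = (\<Sum>i<length gs. c i * gs ! i)" "\<And>i. i < length gs \<Longrightarrow> in_vars n (c i)"
    using ideal_gen_memE[OF assms(2)] by blast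
  then show ?thesis
    using assms(1) ideal_gen_memI[of gs n "\<lambda>i. r * c i"]
    by (simp add: in_vars_mult sum_distrib_left mult.assoc)
qed

lemma ideal_gen_diff:
  assumes "p \<in> ideal_gen n gs" "q \<in> ideal_gen n gs"
  shows "p - q \<in> ideal_gen n gs"
proof -
  have "p + (- 1) * q \<in> ideal_gen n gs"
    using in_vars_uminus[OF in_vars_one] by (intro ideal_gen_add[OF assms(1)] ideal_gen_mult[OF _ assms(2)])
  then show ?thesis by simp
qed

lemma ideal_gen_sum:
  "finite A \<Longrightarrow> (\<And>i. i \<in> A \<Longrightarrow> f i \<in> ideal_gen n gs) \<Longrightarrow> sum f A \<in> ideal_gen n gs"
proof (induction A rule: finite_induct)
  case empty
  show ?case
    using ideal_gen_memI[of gs n "\<lambda>_. 0"] by (simp add: in_vars_zero)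
qed (simp add: ideal_gen_add)

lemma ideal_gen_subset:
  assumes "\<And>i. i < length gs \<Longrightarrow> gs ! i \<in> ideal_gen n hs"
  shows "ideal_gen n gs \<subseteq> ideal_gen n hs"
proof
  fix p assume "p \<in> ideal_gen n gs"
  then obtain c where p: "p = (\<Sum>i<length gs. c i * gs ! i)"
    and c: "\<And>i. i < length gs \<Longrightarrow> in_vars n (c i)"
    using ideal_gen_memE by blast
  show "p \<in> ideal_gen n hs"
    unfolding p
  proof (rule ideal_gen_sum)
    fix i assume "i \<in> {..<length gs}"
    then show "c i * gs ! i \<in> ideal_gen n hs"
      using c assms by (simp add: ideal_gen_mult)
  qed simp
qed

lemma ideal_gen_eq_if_unitriangular:
  assumes len: "length gs = length hs"
    and head: "gs ! 0 = hs ! 0"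
    and r: "in_vars n r"
    and step: "\<And>i. 0 < i \<Longrightarrow> i < length gs \<Longrightarrow> gs ! i = hs ! i + r * gs ! (i - 1)"
  shows "ideal_gen n gs = ideal_gen n hs"
proof
  have "gs ! i \<in> ideal_gen n hs" if "i < length gs" for i
    using that
  proof (induction i)
    case 0
    then show ?case using head len ideal_gen_nth_mem by metis
  next
    case (Suc i)
    then have "hs ! Suc i \<in> ideal_gen n hs" "r * gs ! i \<in> ideal_gen n hs"
      using len by (simp_all add: ideal_gen_nth_mem ideal_gen_mult[OF r])
    then show ?case
      using step[of "Suc i"] Suc.prems by (simp add: ideal_gen_add)
  qed
  then show "ideal_gen n gs \<subseteq> ideal_gen n hs" by (rule ideal_gen_subset)
next
  have "hs ! i \<in> ideal_gen n gs" if "i < length hs" for i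
  proof (cases i)
    case 0
    then show ?thesis using that head len ideal_gen_nth_mem by metis
  next
    case (Suc j)
    then have "hs ! i = gs ! i - r * gs ! j"
      using step[of i] that len by simp
    moreover have "gs ! i \<in> ideal_gen n gs" "r * gs ! j \<in> ideal_gen n gs"
      using that len Suc by (simp_all add: ideal_gen_nth_mem ideal_gen_mult[OF r])
    ultimately show ?thesis by (simp add: ideal_gen_diff)
  qed
  then show "ideal_gen n hs \<subseteq> ideal_gen n gs" by (rule ideal_gen_subset)
qed

theorem proposition4p2:
  fixes n :: nat
  assumes "n \<ge> 1"
  shows "ideal_gen n (map (\<lambda>a. hcomplete a n) [1..<n+1])
       = ideal_gen n (hcomplete 1 n # map (\<lambda>a. hcomplete a (n - 1)) [2..<n+1])"
proof -
  obtain k where n: "n = Suc k" using assms by (cases n) auto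
  let ?gs = "map (\<lambda>a. hcomplete a n) [1..<n+1]"
  let ?hs = "hcomplete 1 n # map (\<lambda>a. hcomplete a (n - 1)) [2..<n+1]"
  have step: "?gs ! i = ?hs ! i + var n * ?gs ! (i - 1)" if "0 < i" "i < length ?gs" for i
  proof -
    obtain j where i: "i = Suc j" using \<open>0 < i\<close> gr0_conv_Suc by blast
    moreover have "j < k" using i that n by (simp del: upt_Suc)
    ultimately have "?gs ! i = hcomplete (Suc i) n" "?gs ! (i - 1) = hcomplete i n"
      and "?hs ! i = hcomplete (Suc i) k"
      using n by (simp_all del: upt_Suc add: nth_map_upt)
    then show ?thesis
      using hcomplete_Suc_recurrence[of i k] n by simp
  qed
  have "length ?gs = length ?hs" "?gs ! 0 = ?hs ! 0"
    using n by (simp_all del: upt_Suc add: nth_map_upt)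
  moreover have "in_vars n (var n)"
    using assms by (simp add: in_vars_var)
  ultimately show ?thesis
    using step by (rule ideal_gen_eq_if_unitriangular)
qed

end
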